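(* The SRT-definable transformations are not closed under composition: there exist a linear group $\mathbf{G}=(D,\leq,+)$, finite label sets $\Sigma,\Gamma,\Theta$, a $(\Sigma,\Gamma,\mathbf{G})$-SRT $\mathcal{S}_1$ and a $(\Gamma,\Theta,\mathbf{G})$-SRT $\mathcal{S}_2$ such that the composition $[\![\mathcal{S}_1]\!]\cdot[\![\mathcal{S}_2]\!]$ is not equal to $[\![\mathcal{S}]\!]$ for any $(\Sigma,\Theta,\mathbf{G})$-SRT $\mathcal{S}$.
   Context: A linear group is a triple $\mathbf{G}=(D,\leq,+)$ where $D$ is an infinite set, $\leq$ is a total order on $D$, and $(D,+)$ is a group with identity $0$. For finite label sets $\Sigma$ (input) and $\Gamma$ (output), a $(\Sigma,\Gamma,\mathbf{G})$-streaming register transducer (SRT) is a tuple $\mathcal{S}=(Q,q_0,k,R_0,\Delta)$ where $Q$ is a finite set of states, $q_0\in Q$, $k\in\mathbb{N}$ is the number of registers, $R_0\in D^k$ gives the initial register values, and $\Delta\subseteq Q\times\Sigma\times\{>,=,<\}^k\times\{\mathsf{old},\mathsf{new},\mathsf{add}\}^k\times\{1,\dots,k\}\times\Gamma\times Q$ is a finite set of transitions. A configuration is a pair $(q,R)$ with $q\in Q$, $R\in D^k$. A transition $(q,\sigma,l,m,u,\gamma,q')$ enables the step $(q,R)\xrightarrow[(\gamma,d')]{(\sigma,d)}(q',R')$ iff (1) for every $i$, $d>R[i]$, $d=R[i]$ or $d<R[i]$ according as $l[i]$ is $>$, $=$ or $<$; (2) for every $i$, $R'[i]=R[i]$ if $m[i]=\mathsf{old}$,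 $R'[i]=d$ if $m[i]=\mathsf{new}$, $R'[i]=R[i]+d$ if $m[i]=\mathsf{add}$; (3) $d'=R'[u]$. A run over a finite data word $s\in(\Sigma\times D)^*$ of length $n$ generating $t\in(\Gamma\times D)^*$ is a sequence of $n$ steps from $(q_0,R_0)$, the $i$-th reading $s[i]$ and emitting $t[i]$, each enabled by a transition of $\Delta$. For words $s,t$ of equal length, $s\otimes t$ is the word with $i$-th letter $(s[i],t[i])$. $[\![\mathcal{S}]\!]=\{s\otimes t:\text{there is a run over }s\text{ generating }t\}$. For a set $\mathcal{T}_1$ of words over $(\Sigma\times D)\times(\Gamma\times D)$ and a set $\mathcal{T}_2$ of words over $(\Gamma\times D)\times(\Theta\times D)$, the composition $\mathcal{T}_1\cdot\mathcal{T}_2$ is the set of all $s_1\otimes s_2$ with $s_1\in(\Sigma\times D)^*$, $s_2\in(\Theta\times D)^*$ such that there exists $s_3\in(\Gamma\times D)^*$ with $s_1\otimes s_3\in\mathcal{T}_1$ and $s_3\otimes s_2\in\mathcal{T}_2$. *)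

theory Defs
  imports Complex_Main
begin

text \<open>A linear group (D, le, add): D infinite, le a total order on D, (D, add) a group.
  No compatibility between order and group operation is required (as in the paper).\<close>

definition linear_group :: "'d set \<Rightarrow> ('d \<Rightarrow> 'd \<Rightarrow> bool) \<Rightarrow> ('d \<Rightarrow> 'd \<Rightarrow> 'd) \<Rightarrow> bool" where
  "linear_group D le add \<longleftrightarrow>
     infinite D \<and>
     (\<forall>x\<in>D. le x x) \<and>
     (\<forall>x\<in>D. \<forall>y\<in>D. le x y \<and> le y x \<longrightarrow> x = y) \<and>
     (\<forall>x\<in>D. \<forall>y\<in>D. \<forall>z\<in>D. le x y \<and> le y z \<longrightarrow> le x z) \<and>
     (\<forall>x\<in>D. \<forall>y\<in>D. le x y \<or> le y x) \<and>
     (\<forall>x\<in>D. \<forall>y\<in>D. add x y \<in> D) \<and>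
     (\<forall>x\<in>D. \<forall>y\<in>D. \<forall>z\<in>D. add (add x y) z = add x (add y z)) \<and>
     (\<exists>e\<in>D. (\<forall>x\<in>D. add e x = x \<and> add x e = x) \<and>
             (\<forall>x\<in>D. \<exists>y\<in>D. add x y = e \<and> add y x = e))"

datatype cmp = Gt | Eq | Lt
datatype upd = Old | New | Add

text \<open>A transition (q, sigma, l, m, u, gamma, q'); registers are indexed 1..k,
  register i being the list entry at position i - 1.\<close>
type_synonym ('q, 'l) trans = "'q \<times> 'l \<times> cmp list \<times> upd list \<times> nat \<times> 'l \<times> 'q"

record ('q, 'l, 'd) srt =
  states :: "'q set"
  init :: 'q
  nregs :: nat
  init_regs :: "'d list"
  delta :: "('q, 'l) trans set"

definition is_srt :: "'d set \<Rightarrow> 'l set \<Rightarrow> 'l set \<Rightarrow> ('q, 'l, 'd) srt \<Rightarrow> bool" where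
  "is_srt D Sig Gam S \<longleftrightarrow>
     finite (states S) \<and> init S \<in> states S \<and>
     length (init_regs S) = nregs S \<and> set (init_regs S) \<subseteq> D \<and>
     finite (delta S) \<and>
     (\<forall>(q, \<sigma>, l, m, u, \<gamma>, q') \<in> delta S.
        q \<in> states S \<and> \<sigma> \<in> Sig \<and> length l = nregs S \<and> length m = nregs S \<and>
        u \<in> {1..nregs S} \<and> \<gamma> \<in> Gam \<and> q' \<in> states S)"

definition cmp_ok :: "('d \<Rightarrow> 'd \<Rightarrow> bool) \<Rightarrow> cmp \<Rightarrow> 'd \<Rightarrow> 'd \<Rightarrow> bool" where
  "cmp_ok le c d r = (case c of
      Gt \<Rightarrow> le r d \<and> r \<noteq> d
    | Eq \<Rightarrow> d = r
    | Lt \<Rightarrow> le d r \<and> d \<noteq> r)"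

definition upd_val :: "('d \<Rightarrow> 'd \<Rightarrow> 'd) \<Rightarrow> upd \<Rightarrow> 'd \<Rightarrow> 'd \<Rightarrow> 'd" where
  "upd_val add m d r = (case m of Old \<Rightarrow> r | New \<Rightarrow> d | Add \<Rightarrow> add r d)"

definition step_enabled :: "('d \<Rightarrow> 'd \<Rightarrow> bool) \<Rightarrow> ('d \<Rightarrow> 'd \<Rightarrow> 'd) \<Rightarrow> ('q, 'l) trans \<Rightarrow>
    'q \<Rightarrow> 'd list \<Rightarrow> 'l \<Rightarrow> 'd \<Rightarrow> 'l \<Rightarrow> 'd \<Rightarrow> 'q \<Rightarrow> 'd list \<Rightarrow> bool" where
  "step_enabled le add tr q R \<sigma> d \<gamma> d' q2 R2 \<longleftrightarrow>
     (case tr of (p, \<sigma>t, l, m, u, \<gamma>t, p') \<Rightarrow>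
        p = q \<and> \<sigma>t = \<sigma> \<and> \<gamma>t = \<gamma> \<and> p' = q2 \<and>
        length l = length R \<and> length m = length R \<and>
        (\<forall>i<length R. cmp_ok le (l ! i) d (R ! i)) \<and>
        length R2 = length R \<and>
        (\<forall>i<length R. R2 ! i = upd_val add (m ! i) d (R ! i)) \<and>
        1 \<le> u \<and> u \<le> length R \<and> d' = R2 ! (u - 1))"

primrec has_run :: "('d \<Rightarrow> 'd \<Rightarrow> bool) \<Rightarrow> ('d \<Rightarrow> 'd \<Rightarrow> 'd) \<Rightarrow> ('q, 'l) trans set \<Rightarrow>
    'q \<Rightarrow> 'd list \<Rightarrow> (('l \<times> 'd) \<times> ('l \<times> 'd)) list \<Rightarrow> bool" where
  "has_run le add \<Delta> q R [] = True"
| "has_run le add \<Delta> q R (x # w) =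
     (\<exists>tr\<in>\<Delta>. \<exists>q2 R2. step_enabled le add tr q R (fst (fst x)) (snd (fst x))
                         (fst (snd x)) (snd (snd x)) q2 R2 \<and> has_run le add \<Delta> q2 R2 w)"

text \<open>[[S]]: the set of s (x) t with s a data word over D (labels are forced by Delta).\<close>
definition srt_sem :: "'d set \<Rightarrow> ('d \<Rightarrow> 'd \<Rightarrow> bool) \<Rightarrow> ('d \<Rightarrow> 'd \<Rightarrow> 'd) \<Rightarrow> ('q, 'l, 'd) srt \<Rightarrow>
    (('l \<times> 'd) \<times> ('l \<times> 'd)) list set" where
  "srt_sem D le add S =
     {w. (\<forall>x\<in>set w. snd (fst x) \<in> D) \<and> has_run le add (delta S) (init S) (init_regs S) w}"

definition compose :: "(('a \<times> 'b) list) set \<Rightarrow> (('b \<times> 'c) list) set \<Rightarrow> (('a \<times> 'c) list) set" where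
  "compose T1 T2 = {zip s1 s2 | s1 s2. length s1 = length s2 \<and>
      (\<exists>s3. length s3 = length s1 \<and> zip s1 s3 \<in> T1 \<and> zip s3 s2 \<in> T2)}"

end

theory Submission
  imports Defs
begin

text \<open>Order the integers by putting every even integer below every odd one, each class
  ordered as usual; a linear group need not relate its order to its addition. The first
  transducer maps d to d + 1 on inputs d < 1, the second accepts exactly the inputs > 0, so on
  one-letter words their composition is defined precisely on the even integers. An SRT,
  however, sees its first input only through comparisons with its finitely many initial
  registers, and for large N the even 2N and the odd -2N - 1 compare alike with all of them.\<close>

lemma infinite_Ints: "infinite (\<int> :: 'a::ring_char_0 set)"
proof
  assume "finite (\<int> :: 'a set)"
  then have "finite (range (of_int :: int \<Rightarrow> 'a))" by (simp add: Ints_def)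
  moreover have "inj (of_int :: int \<Rightarrow> 'a)" by (simp add: inj_def)
  ultimately show False
    using finite_imageD infinite_UNIV_int by blast
qed

lemma linear_group_Ints:
  fixes le :: "'a::ring_char_0 \<Rightarrow> 'a \<Rightarrow> bool"
  assumes "\<And>x. le x x" and "\<And>x y. le x y \<Longrightarrow> le y x \<Longrightarrow> x = y"
    and "\<And>x y z. le x y \<Longrightarrow> le y z \<Longrightarrow> le x z" and "\<And>x y. le x y \<or> le y x"
  shows "linear_group \<int> le (+)"
  unfolding linear_group_def using assms infinite_Ints
  by (auto simp: add.assoc intro!: bexI[of _ 0] bexI[of _ "- _"] Ints_minus)

lemma exists_int_bound:
  fixes A :: "real set"
  assumes "finite A"
  obtains N :: int where "\<And>r. r \<in> A \<Longrightarrow> \<bar>r\<bar> < of_int N"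
proof
  fix r assume "r \<in> A"
  then have "\<bar>r\<bar> \<le> Max (insert 0 (abs ` A))" using assms by simp
  also have "\<dots> \<le> of_int \<lceil>Max (insert 0 (abs ` A))\<rceil>" by (rule le_of_int_ceiling)
  finally show "\<bar>r\<bar> < of_int (\<lceil>Max (insert 0 (abs ` A))\<rceil> + 1)" by simp
qed

lemma Cons_Nil_in_compose_iff:
  "[(a, b)] \<in> compose T1 T2 \<longleftrightarrow> (\<exists>c. [(a, c)] \<in> T1 \<and> [(c, b)] \<in> T2)"
proof
  assume "[(a, b)] \<in> compose T1 T2"
  then obtain s1 s2 s3 where "[(a, b)] = zip s1 s2" "length s1 = length s2"
    "length s3 = length s1" "zip s1 s3 \<in> T1" "zip s3 s2 \<in> T2"
    unfolding compose_def by blast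
  then show "\<exists>c. [(a, c)] \<in> T1 \<and> [(c, b)] \<in> T2"
    by (cases s1; cases s2; cases s3) auto
next
  assume "\<exists>c. [(a, c)] \<in> T1 \<and> [(c, b)] \<in> T2"
  then obtain c where "zip [a] [c] \<in> T1" "zip [c] [b] \<in> T2" by auto
  moreover have "[(a, b)] = zip [a] [b]" by simp
  ultimately show "[(a, b)] \<in> compose T1 T2"
    unfolding compose_def
    by (intro CollectI exI[of _ "[a]"] exI[of _ "[b]"]) (auto intro!: exI[of _ "[c]"])
qed

lemma Cons_Nil_in_srt_sem_iff:
  "[((\<sigma>, d), (\<gamma>, e))] \<in> srt_sem D le add S \<longleftrightarrow>
     d \<in> D \<and> (\<exists>tr\<in>delta S. \<exists>q R. step_enabled le add tr (init S) (init_regs S) \<sigma> d \<gamma> e q R)"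
  by (simp add: srt_sem_def)

lemma step_enabled_input_cong:
  assumes "step_enabled le add tr q R \<sigma> x \<gamma> e q' R'"
    and "\<forall>r\<in>set R. \<forall>c. cmp_ok le c x r = cmp_ok le c y r"
  shows "\<exists>e' R''. step_enabled le add tr q R \<sigma> y \<gamma> e' q' R''"
proof -
  obtain p \<sigma>t l m u \<gamma>t p' where tr: "tr = (p, \<sigma>t, l, m, u, \<gamma>t, p')" by (cases tr)
  define R'' where "R'' = map (\<lambda>i. upd_val add (m ! i) y (R ! i)) [0..<length R]"
  have "step_enabled le add tr q R \<sigma> y \<gamma> (R'' ! (u - 1)) q' R''"
    using assms unfolding step_enabled_def tr R''_def by auto
  then show ?thesis by blast
qed

lemma Cons_Nil_in_srt_sem_input_cong:
  assumes "[((\<sigma>, x), (\<gamma>, e))] \<in> srt_sem D le add S" and "y \<in> D"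
    and "\<forall>r\<in>set (init_regs S). \<forall>c. cmp_ok le c x r = cmp_ok le c y r"
  shows "\<exists>e'. [((\<sigma>, y), (\<gamma>, e'))] \<in> srt_sem D le add S"
  using assms step_enabled_input_cong unfolding Cons_Nil_in_srt_sem_iff by meson

definition even_int :: "real \<Rightarrow> bool" where
  "even_int x \<longleftrightarrow> (\<exists>k::int. x = of_int (2 * k))"

definition parity_le :: "real \<Rightarrow> real \<Rightarrow> bool" where
  "parity_le x y \<longleftrightarrow> (even_int x \<and> \<not> even_int y) \<or> (even_int x = even_int y \<and> x \<le> y)"

lemma even_int_of_int: "even_int (of_int k) \<longleftrightarrow> even k"
  unfolding even_int_def dvd_def by (simp only: of_int_eq_iff)

lemma linear_group_parity_le: "linear_group \<int> parity_le (+)"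
  by (rule linear_group_Ints) (auto simp: parity_le_def)

lemma parity_le_cmp_ok_far:
  assumes "\<bar>r\<bar> < of_int N"
  shows "cmp_ok parity_le c (of_int (2 * N)) r = cmp_ok parity_le c (of_int (- 2 * N - 1)) r"
proof -
  have "even_int (of_int (2 * N))" "\<not> even_int (of_int (- 2 * N - 1))"
    using even_int_of_int[of "2 * N"] even_int_of_int[of "- 2 * N - 1"] by simp_all
  then show ?thesis using assms unfolding cmp_ok_def parity_le_def
    by (cases c) auto
qed

definition succ_srt :: "(nat, nat, real) srt" where
  "succ_srt = \<lparr>states = {0}, init = 0, nregs = 1, init_regs = [1],
         delta = {(0, 0, [Lt], [Add], 1, 0, 0)}\<rparr>"

definition pos_srt :: "(nat, nat, real) srt" where
  "pos_srt = \<lparr>states = {0}, init = 0, nregs = 1, init_regs = [0],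
         delta = {(0, 0, [Gt], [Old], 1, 1, 0)}\<rparr>"

lemma succ_srt_Cons_Nil_iff:
  "[((a, d), c)] \<in> srt_sem \<int> parity_le (+) succ_srt \<longleftrightarrow>
     a = 0 \<and> d \<in> \<int> \<and> cmp_ok parity_le Lt d 1 \<and> c = (0, 1 + d)"
  by (cases c)
    (auto simp: Cons_Nil_in_srt_sem_iff succ_srt_def step_enabled_def upd_val_def
      intro!: exI[of _ "[1 + d]"])

lemma pos_srt_Cons_Nil_iff:
  "[(c, b)] \<in> srt_sem \<int> parity_le (+) pos_srt \<longleftrightarrow>
     fst c = 0 \<and> snd c \<in> \<int> \<and> cmp_ok parity_le Gt (snd c) 0 \<and> b = (1, 0)"
  by (cases c; cases b)
    (auto simp: Cons_Nil_in_srt_sem_iff pos_srt_def step_enabled_def upd_val_def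
      intro!: exI[of _ "[0]"])

lemma compose_succ_pos_Cons_Nil_iff:
  "[((a, d), b)] \<in>
      compose (srt_sem \<int> parity_le (+) succ_srt) (srt_sem \<int> parity_le (+) pos_srt) \<longleftrightarrow>
     a = 0 \<and> d \<in> \<int> \<and> even_int d \<and> b = (1, 0)"
proof -
  have "cmp_ok parity_le Lt d 1 \<and> cmp_ok parity_le Gt (1 + d) 0 \<longleftrightarrow> even_int d" if "d \<in> \<int>" for d
  proof -
    from that obtain k where d: "d = of_int k" by (rule Ints_cases)
    have parities: "\<not> even_int 1" "even_int 0"
      "even_int d \<longleftrightarrow> even k" "even_int (1 + d) \<longleftrightarrow> odd k"
      using even_int_of_int[of 1] even_int_of_int[of 0] even_int_of_int[of k]
        even_int_of_int[of "1 + k"]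
      by (simp_all add: d)
    show ?thesis
    proof (cases "even k")
      case True
      then show ?thesis using parities unfolding cmp_ok_def parity_le_def by auto
    next
      case False
      then have "k < 0 \<or> k > 0" by (cases "k = 0") auto
      then have "\<not> (d < 1 \<and> 0 < 1 + d)" by (auto simp: d)
      then show ?thesis using False parities unfolding cmp_ok_def parity_le_def by auto
    qed
  qed
  then show ?thesis
    by (auto simp: Cons_Nil_in_compose_iff succ_srt_Cons_Nil_iff pos_srt_Cons_Nil_iff)
qed

theorem theorem3p14:
  shows "\<exists>(D :: real set) (le :: real \<Rightarrow> real \<Rightarrow> bool) add
            (Sig :: nat set) (Gam :: nat set) (The :: nat set)
            (S1 :: (nat, nat, real) srt) (S2 :: (nat, nat, real) srt).
     linear_group D le add \<and> finite Sig \<and> finite Gam \<and> finite The \<and>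
     is_srt D Sig Gam S1 \<and> is_srt D Gam The S2 \<and>
     (\<forall>S :: (nat, nat, real) srt. is_srt D Sig The S \<longrightarrow>
        compose (srt_sem D le add S1) (srt_sem D le add S2) \<noteq> srt_sem D le add S)"
proof (intro exI conjI allI impI)
  show "linear_group \<int> parity_le (+)" by (rule linear_group_parity_le)
  show "is_srt \<int> {0} {0} succ_srt" by (simp add: is_srt_def succ_srt_def)
  show "is_srt \<int> {0} {1} pos_srt" by (simp add: is_srt_def pos_srt_def)
  fix S :: "(nat, nat, real) srt"
  let ?T = "compose (srt_sem \<int> parity_le (+) succ_srt) (srt_sem \<int> parity_le (+) pos_srt)"
  show "?T \<noteq> srt_sem \<int> parity_le (+) S"
  proof
    assume T: "?T = srt_sem \<int> parity_le (+) S"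
    obtain N :: int where N: "\<And>r. r \<in> set (init_regs S) \<Longrightarrow> \<bar>r\<bar> < of_int N"
      using exists_int_bound[of "set (init_regs S)"] by blast
    have "[((0, of_int (2 * N)), (1, 0))] \<in> srt_sem \<int> parity_le (+) S"
      using T compose_succ_pos_Cons_Nil_iff even_int_of_int[of "2 * N"] by simp
    then obtain e where "[((0, of_int (- 2 * N - 1)), (1, e))] \<in> srt_sem \<int> parity_le (+) S"
      using Cons_Nil_in_srt_sem_input_cong parity_le_cmp_ok_far N Ints_of_int by metis
    then show False
      using T compose_succ_pos_Cons_Nil_iff even_int_of_int[of "- 2 * N - 1"] by simp
  qed
qed simp_all

end
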